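(* Let $q\geq 2$ be a prime power. In $\mathrm{PG}(2,q^2)$ there exists a semioval $\mathcal{S}\subset\mathcal{H}_q$ of size $k$ for every integer $k\in\{q^3-q^2+q\}\cup[q^3-q^2+q+2,\,q^3+1]$.
   Context: $\mathrm{PG}(2,q^2)$ is the Desarguesian projective plane over $\mathbb{F}_{q^2}$. $\mathcal{H}_q$ denotes the Hermitian curve, the set of points of $\mathrm{PG}(2,q^2)$ satisfying $X_2X_0^q+X_2^qX_0+X_1^{q+1}=0$ (it has $q^3+1$ points). A semioval is a non-empty pointset $\mathcal{S}$ such that for every $P\in\mathcal{S}$ there is a unique line $t_P$ with $\mathcal{S}\cap t_P=\{P\}$. *)

theory Defs
  imports "HOL-Computational_Algebra.Primes"
begin

type_synonym 'a vec3 = "'a \<times> 'a \<times> 'a"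

definition proj_point :: "('a::field) vec3 \<Rightarrow> 'a vec3 set" where
  "proj_point v = (case v of (x0, x1, x2) \<Rightarrow> {(c * x0, c * x1, c * x2) | c. c \<noteq> 0})"

definition PG_points :: "('a::field) vec3 set set" where
  "PG_points = {proj_point v | v. v \<noteq> (0, 0, 0)}"

definition PG_line :: "('a::field) vec3 \<Rightarrow> 'a vec3 set set" where
  "PG_line u = (case u of (a, b, c) \<Rightarrow>
     {P \<in> PG_points. \<exists>x0 x1 x2. (x0, x1, x2) \<in> P \<and> a * x0 + b * x1 + c * x2 = 0})"

definition PG_lines :: "('a::field) vec3 set set set" where
  "PG_lines = {PG_line u | u. u \<noteq> (0, 0, 0)}"

definition hermitian_curve :: "nat \<Rightarrow> ('a::field) vec3 set set" where
  "hermitian_curve q = {P \<in> PG_points. \<exists>x0 x1 x2. (x0, x1, x2) \<in> P \<and>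
       x2 * x0 ^ q + x2 ^ q * x0 + x1 ^ (q + 1) = 0}"

definition semioval :: "('a::field) vec3 set set \<Rightarrow> bool" where
  "semioval S \<longleftrightarrow> S \<noteq> {} \<and> S \<subseteq> PG_points \<and>
     (\<forall>P \<in> S. \<exists>!t. t \<in> PG_lines \<and> S \<inter> t = {P})"

end

theory Submission
  imports Defs "HOL-Computational_Algebra.Polynomial"
begin

text \<open>
  The Hermitian curve is a unital. The line at infinity touches it only at the point at
  infinity, the line \<open>y = b - a\<^sup>q (x - a)\<close> touches it only at the affine point \<open>(a, b)\<close>,
  and every other line through a point of the curve meets it in \<open>q + 1\<close> points; so the whole
  curve is a semioval with \<open>q\<^sup>3 + 1\<close> points.

  For the other sizes drop the point at infinity, choose \<open>q - 1\<close> vertical lines, and keep on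
  each of them either none or at least two of its \<open>q\<close> curve points. A surviving point \<open>P\<close>
  keeps its tangent; its vertical line still carries a second point, and any other line
  through \<open>P\<close> meets the curve in \<open>q + 1\<close> points with distinct abscissae, one of which differs
  from that of \<open>P\<close> and lies off the chosen vertical lines. Keeping \<open>t\<close> points on the chosen
  lines, with \<open>t = 0\<close> or \<open>2 \<le> t \<le> q\<^sup>2 - q\<close>, gives every size \<open>q\<^sup>3 - q\<^sup>2 + q + t\<close>.
\<close>

lemma card_trinomial_roots_le:
  fixes c d :: "'a::field"
  assumes "2 \<le> k"
  shows "card {x. x ^ k + c * x + d = 0} \<le> k"
proof -
  define P where "P = monom (1::'a) k + [:d, c:]"
  have eval: "poly P x = x ^ k + c * x + d" for x
    by (simp add: P_def poly_monom algebra_simps)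
  have "coeff P k = 1"
    using assms by (simp add: P_def coeff_monom coeff_pCons split: nat.split)
  then have "P \<noteq> 0" by auto
  have "degree [:d, c:] \<le> k"
    using assms degree_pCons_le[of d "[:c:]"] by simp
  then have "degree P \<le> k"
    unfolding P_def by (intro degree_add_le) (simp_all add: degree_monom_le)
  moreover have "card {x. poly P x = 0} \<le> degree P"
    using \<open>P \<noteq> 0\<close> by (rule card_poly_roots_bound)
  ultimately show ?thesis by (simp add: eval)
qed

lemma card_fibre_eq_if_card_eq_mult:
  assumes "finite A" "finite B" "f ` A \<subseteq> B" "card B \<le> b"
    and fibre_le: "\<And>z. z \<in> B \<Longrightarrow> card {x \<in> A. f x = z} \<le> a"
    and "card A = a * b" "y \<in> B"
  shows "card {x \<in> A. f x = y} = a"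
proof (rule ccontr)
  assume "card {x \<in> A. f x = y} \<noteq> a"
  with fibre_le \<open>y \<in> B\<close> have less: "card {x \<in> A. f x = y} < a" by fastforce
  have "card A = card (\<Union>z\<in>B. {x \<in> A. f x = z})"
    using \<open>f ` A \<subseteq> B\<close> by (intro arg_cong[where f = card]) auto
  also have "\<dots> = (\<Sum>z\<in>B. card {x \<in> A. f x = z})"
    using assms(1,2) by (intro card_UN_disjoint) auto
  also have "\<dots> < (\<Sum>z\<in>B. a)"
    using assms(2) fibre_le less \<open>y \<in> B\<close> by (intro sum_strict_mono_ex1) auto
  also have "\<dots> \<le> a * b"
    using \<open>card B \<le> b\<close> by simp
  finally show False using \<open>card A = a * b\<close> by simp
qed

lemma exists_summands_avoiding_one:
  fixes C :: "'a set" and q t :: nat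
  assumes "finite C" "2 \<le> q" "t \<noteq> 1" "t \<le> card C * q" "3 \<le> q \<or> even t"
  shows "\<exists>g. (\<forall>c\<in>C. g c \<le> q \<and> g c \<noteq> 1) \<and> (\<Sum>c\<in>C. g c) = t"
  using assms(1,3-5)
proof (induction C arbitrary: t rule: finite_induct)
  case empty
  then show ?case by simp
next
  case (insert c C)
  let ?n = "card C * q"
  have "?n \<noteq> 1" using \<open>2 \<le> q\<close> by (cases "card C") auto
  obtain x where x: "x \<le> q" "x \<noteq> 1" "x \<le> t" "t - x \<noteq> 1" "t - x \<le> ?n" "3 \<le> q \<or> even (t - x)"
  proof (cases "t \<le> ?n")
    case True
    then show ?thesis using insert.prems by (intro that[of 0]) auto
  next
    case False
    have "t \<le> ?n + q" using insert by simp
    show ?thesis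
    proof (cases "t = ?n + 1")
      case True
      \<comment> \<open>the summand \<open>t - n = 1\<close> is forbidden, so take 2 here and leave \<open>n - 1\<close> to \<open>C\<close>\<close>
      have "3 \<le> q"
        using insert.prems(3) \<open>2 \<le> q\<close> True by (cases "q = 2") auto
      have "?n \<noteq> 0" using True insert.prems(1) by auto
      then have "q \<le> ?n" by (cases "card C") auto
      then have "3 \<le> ?n" using \<open>3 \<le> q\<close> by linarith
      then show ?thesis using True \<open>3 \<le> q\<close> \<open>?n \<noteq> 0\<close> by (intro that[of 2]) auto
    next
      case False
      have "3 \<le> q \<or> even ?n" using \<open>2 \<le> q\<close> by (cases "q = 2") auto
      then show ?thesis
        using False \<open>\<not> t \<le> ?n\<close> \<open>t \<le> ?n + q\<close> \<open>?n \<noteq> 1\<close> insert.prems(3)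
        by (intro that[of "t - ?n"]) auto
    qed
  qed
  obtain g where g: "\<forall>c\<in>C. g c \<le> q \<and> g c \<noteq> 1" "(\<Sum>c\<in>C. g c) = t - x"
    using insert.IH[OF x(4-6)] by blast
  have "(\<Sum>c'\<in>insert c C. (g(c := x)) c') = x + (\<Sum>c'\<in>C. g c')"
    using insert.hyps by (auto intro: sum.cong)
  then show ?case using g x by (intro exI[of _ "g(c := x)"]) auto
qed

lemma card_eq_sum_column_cards:
  fixes A :: "('a::finite \<times> 'b) set"
  assumes "finite A"
  shows "card A = (\<Sum>x\<in>UNIV. card {y. (x, y) \<in> A})"
proof -
  have "card A = card (SIGMA x:UNIV. {y. (x, y) \<in> A})"
    by (intro arg_cong[where f = card]) auto
  also have "\<dots> = (\<Sum>x\<in>UNIV. card {y. (x, y) \<in> A})"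
  proof (rule card_SigmaI)
    show "\<forall>x\<in>UNIV. finite {y. (x, y) \<in> A}"
    proof
      fix x
      have "{y. (x, y) \<in> A} \<subseteq> snd ` A" by force
      then show "finite {y. (x, y) \<in> A}" by (rule finite_subset[OF _ finite_imageI[OF assms]])
    qed
  qed simp
  finally show ?thesis .
qed

lemma exists_subset_with_column_cards:
  assumes "\<And>x. g x \<le> card {y. (x, y) \<in> R}"
  obtains A where "A \<subseteq> R" "\<And>x. card {y. (x, y) \<in> A} = g x"
proof -
  have "\<exists>K. K \<subseteq> {y. (x, y) \<in> R} \<and> card K = g x" for x
  proof -
    obtain K where "K \<subseteq> {y. (x, y) \<in> R}" "card K = g x"
      using assms[of x] by (rule obtain_subset_with_card_n)
    then show ?thesis by blast
  qed
  then have "\<forall>x. \<exists>K. K \<subseteq> {y. (x, y) \<in> R} \<and> card K = g x" by blast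
  then obtain K where K: "\<forall>x. K x \<subseteq> {y. (x, y) \<in> R} \<and> card (K x) = g x"
    by (rule choice[THEN exE])
  show ?thesis
  proof
    show "(SIGMA x:UNIV. K x) \<subseteq> R" using K by blast
    show "card {y. (x, y) \<in> (SIGMA x:UNIV. K x)} = g x" for x using K by simp
  qed
qed

section \<open>Affine coordinates on the projective plane\<close>

lemma mem_proj_point_iff:
  "(y0, y1, y2) \<in> proj_point (x0, x1, x2) \<longleftrightarrow>
     (\<exists>c. c \<noteq> 0 \<and> y0 = c * x0 \<and> y1 = c * x1 \<and> y2 = c * x2)"
  by (auto simp: proj_point_def)

lemma proj_point_self: "(x0, x1, x2) \<in> proj_point (x0, x1, x2)"
  by (auto simp: mem_proj_point_iff intro: exI[of _ 1])

lemma proj_point_scale: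
  assumes "c \<noteq> 0"
  shows "proj_point (c * x0, c * x1, c * x2) = proj_point (x0, x1, x2)"
proof (intro set_eqI)
  fix y :: "'a vec3"
  obtain y0 y1 y2 where y: "y = (y0, y1, y2)" by (cases y)
  have "(\<exists>d. d \<noteq> 0 \<and> y0 = d * (c * x0) \<and> y1 = d * (c * x1) \<and> y2 = d * (c * x2)) \<longleftrightarrow>
        (\<exists>d. d \<noteq> 0 \<and> y0 = d * x0 \<and> y1 = d * x1 \<and> y2 = d * x2)"
  proof
    assume "\<exists>d. d \<noteq> 0 \<and> y0 = d * (c * x0) \<and> y1 = d * (c * x1) \<and> y2 = d * (c * x2)"
    then obtain d where "d \<noteq> 0" "y0 = d * (c * x0)" "y1 = d * (c * x1)" "y2 = d * (c * x2)"
      by blast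
    then show "\<exists>d. d \<noteq> 0 \<and> y0 = d * x0 \<and> y1 = d * x1 \<and> y2 = d * x2"
      using assms by (intro exI[of _ "d * c"]) auto
  next
    assume "\<exists>d. d \<noteq> 0 \<and> y0 = d * x0 \<and> y1 = d * x1 \<and> y2 = d * x2"
    then obtain d where "d \<noteq> 0" "y0 = d * x0" "y1 = d * x1" "y2 = d * x2"
      by blast
    then show "\<exists>e. e \<noteq> 0 \<and> y0 = e * (c * x0) \<and> y1 = e * (c * x1) \<and> y2 = e * (c * x2)"
      using assms by (intro exI[of _ "d / c"]) auto
  qed
  then show "y \<in> proj_point (c * x0, c * x1, c * x2) \<longleftrightarrow> y \<in> proj_point (x0, x1, x2)"
    unfolding y mem_proj_point_iff .
qed

lemma proj_point_in_PG_points: "(x0, x1, x2) \<noteq> (0, 0, 0) \<Longrightarrow> proj_point (x0, x1, x2) \<in> PG_points"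
  unfolding PG_points_def by blast

lemma PG_pointsE:
  assumes "P \<in> PG_points"
  obtains x0 x1 x2 where "P = proj_point (x0, x1, x2)" "(x0, x1, x2) \<noteq> (0, 0, 0)"
  using assms unfolding PG_points_def by auto

lemma proj_point_in_PG_line_iff:
  assumes "(x0, x1, x2) \<noteq> (0, 0, 0)"
  shows "proj_point (x0, x1, x2) \<in> PG_line (u0, u1, u2) \<longleftrightarrow> u0 * x0 + u1 * x1 + u2 * x2 = 0"
proof
  assume "proj_point (x0, x1, x2) \<in> PG_line (u0, u1, u2)"
  then obtain y0 y1 y2 where y: "(y0, y1, y2) \<in> proj_point (x0, x1, x2)"
    "u0 * y0 + u1 * y1 + u2 * y2 = 0"
    unfolding PG_line_def by auto
  then obtain c where "c \<noteq> 0" "y0 = c * x0" "y1 = c * x1" "y2 = c * x2"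
    by (auto simp: mem_proj_point_iff)
  with y(2) have "c * (u0 * x0 + u1 * x1 + u2 * x2) = 0" by (simp add: algebra_simps)
  with \<open>c \<noteq> 0\<close> show "u0 * x0 + u1 * x1 + u2 * x2 = 0" by simp
next
  assume "u0 * x0 + u1 * x1 + u2 * x2 = 0"
  then show "proj_point (x0, x1, x2) \<in> PG_line (u0, u1, u2)"
    unfolding PG_line_def using proj_point_in_PG_points[OF assms] proj_point_self by blast
qed

lemma proj_point_in_hermitian_curve_iff:
  assumes "(x0, x1, x2) \<noteq> (0, 0, 0)"
  shows "proj_point (x0, x1, x2) \<in> hermitian_curve q \<longleftrightarrow>
    x2 * x0 ^ q + x2 ^ q * x0 + x1 ^ (q + 1) = 0"
proof
  assume "proj_point (x0, x1, x2) \<in> hermitian_curve q"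
  then obtain y0 y1 y2 where y: "(y0, y1, y2) \<in> proj_point (x0, x1, x2)"
    "y2 * y0 ^ q + y2 ^ q * y0 + y1 ^ (q + 1) = 0"
    unfolding hermitian_curve_def by auto
  then obtain c where "c \<noteq> 0" "y0 = c * x0" "y1 = c * x1" "y2 = c * x2"
    by (auto simp: mem_proj_point_iff)
  with y(2) have "c ^ (q + 1) * (x2 * x0 ^ q + x2 ^ q * x0 + x1 ^ (q + 1)) = 0"
    by (simp add: algebra_simps power_mult_distrib)
  with \<open>c \<noteq> 0\<close> show "x2 * x0 ^ q + x2 ^ q * x0 + x1 ^ (q + 1) = 0" by simp
next
  assume "x2 * x0 ^ q + x2 ^ q * x0 + x1 ^ (q + 1) = 0"
  then show "proj_point (x0, x1, x2) \<in> hermitian_curve q"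
    unfolding hermitian_curve_def using proj_point_in_PG_points[OF assms] proj_point_self by blast
qed

lemma PG_line_scale:
  assumes "c \<noteq> 0"
  shows "PG_line (c * u0, c * u1, c * u2) = PG_line (u0, u1, u2)"
proof (intro set_eqI)
  fix P :: "'a vec3 set"
  show "P \<in> PG_line (c * u0, c * u1, c * u2) \<longleftrightarrow> P \<in> PG_line (u0, u1, u2)"
  proof (cases "P \<in> PG_points")
    case True
    then obtain x0 x1 x2 where P: "P = proj_point (x0, x1, x2)" "(x0, x1, x2) \<noteq> (0, 0, 0)"
      by (rule PG_pointsE)
    have "c * u0 * x0 + c * u1 * x1 + c * u2 * x2 = c * (u0 * x0 + u1 * x1 + u2 * x2)"
      by (simp add: algebra_simps)
    then show ?thesis
      unfolding P(1) using proj_point_in_PG_line_iff[OF P(2)] assms by simp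
  next
    case False
    then show ?thesis unfolding PG_line_def by auto
  qed
qed

lemma PG_line_in_PG_lines: "(u0, u1, u2) \<noteq> (0, 0, 0) \<Longrightarrow> PG_line (u0, u1, u2) \<in> PG_lines"
  unfolding PG_lines_def by blast

lemma PG_linesE:
  assumes "t \<in> PG_lines"
  obtains u0 u1 u2 where "t = PG_line (u0, u1, u2)" "(u0, u1, u2) \<noteq> (0, 0, 0)"
  using assms unfolding PG_lines_def by auto

definition affine_point :: "'a::field \<times> 'a \<Rightarrow> 'a vec3 set" where
  "affine_point = (\<lambda>(x, y). proj_point (1, x, y))"

definition point_at_infinity :: "'a::field vec3 set" where
  "point_at_infinity = proj_point (0, 0, 1)"

definition line_at_infinity :: "'a::field vec3 set set" where
  "line_at_infinity = PG_line (1, 0, 0)"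

definition vertical_line :: "'a::field \<Rightarrow> 'a vec3 set set" where
  "vertical_line a = PG_line (- a, 1, 0)"

definition affine_line :: "'a::field \<Rightarrow> 'a \<Rightarrow> 'a \<Rightarrow> 'a vec3 set set" where
  "affine_line a b m = PG_line (m * a - b, - m, 1)"

lemma affine_point_in_PG_points: "affine_point p \<in> PG_points"
  unfolding affine_point_def by (cases p) (simp add: proj_point_in_PG_points)

lemma affine_point_in_PG_line_iff:
  "affine_point (x, y) \<in> PG_line (u0, u1, u2) \<longleftrightarrow> u0 + u1 * x + u2 * y = 0"
  unfolding affine_point_def by (simp add: proj_point_in_PG_line_iff)

lemma point_at_infinity_in_PG_line_iff: "point_at_infinity \<in> PG_line (u0, u1, u2) \<longleftrightarrow> u2 = 0"
  unfolding point_at_infinity_def by (subst proj_point_in_PG_line_iff) auto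

lemma affine_point_eq_iff [simp]: "affine_point p = affine_point p' \<longleftrightarrow> p = p'"
proof
  obtain x y x' y' where p: "p = (x, y)" "p' = (x', y')" by (cases p, cases p')
  assume "affine_point p = affine_point p'"
  then have "(1, x, y) \<in> proj_point (1, x', y')"
    unfolding p affine_point_def using proj_point_self by (metis case_prod_conv)
  then show "p = p'" unfolding p by (auto simp: mem_proj_point_iff)
qed simp

lemma affine_point_neq_point_at_infinity [simp]:
  "affine_point p \<noteq> point_at_infinity" "point_at_infinity \<noteq> affine_point p"
proof -
  obtain x y where p: "p = (x, y)" by (cases p)
  have "(1, x, y) \<notin> proj_point (0, 0, 1)" by (auto simp: mem_proj_point_iff)
  then show "affine_point p \<noteq> point_at_infinity"
    unfolding p affine_point_def point_at_infinity_def using proj_point_self by (metis case_prod_conv)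
  then show "point_at_infinity \<noteq> affine_point p" by (rule not_sym)
qed

lemma lines_in_PG_lines [simp]:
  "line_at_infinity \<in> PG_lines" "vertical_line a \<in> PG_lines" "affine_line a b m \<in> PG_lines"
  unfolding line_at_infinity_def vertical_line_def affine_line_def
  by (simp_all add: PG_line_in_PG_lines)

lemma mem_lines_iff [simp]:
  "affine_point (x, y) \<notin> line_at_infinity"
  "point_at_infinity \<in> line_at_infinity"
  "affine_point (x, y) \<in> vertical_line a \<longleftrightarrow> x = a"
  "point_at_infinity \<in> vertical_line a"
  "affine_point (x, y) \<in> affine_line a b m \<longleftrightarrow> y = b + m * (x - a)"
  "point_at_infinity \<notin> affine_line a b m"
  unfolding line_at_infinity_def vertical_line_def affine_line_def
  by (simp_all add: affine_point_in_PG_line_iff point_at_infinity_in_PG_line_iff)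
    (simp_all add: algebra_simps eq_neg_iff_add_eq_0 neg_eq_iff_add_eq_0)

lemma lines_through_affine_point:
  assumes "t \<in> PG_lines" "affine_point (a, b) \<in> t"
  shows "t = vertical_line a \<or> (\<exists>m. t = affine_line a b m)"
proof -
  obtain u0 u1 u2 where t: "t = PG_line (u0, u1, u2)" "(u0, u1, u2) \<noteq> (0, 0, 0)"
    using assms(1) by (rule PG_linesE)
  have on_t: "u0 + u1 * a + u2 * b = 0"
    using assms(2) t(1) by (simp add: affine_point_in_PG_line_iff)
  show ?thesis
  proof (cases "u2 = 0")
    case True
    with t(2) on_t have "u1 \<noteq> 0" by auto
    have "u0 = u1 * - a"
      using on_t True by (simp add: algebra_simps eq_neg_iff_add_eq_0)
    with t(1) True have "t = PG_line (u1 * - a, u1 * 1, u1 * 0)" by simp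
    also have "\<dots> = vertical_line a"
      unfolding vertical_line_def using \<open>u1 \<noteq> 0\<close> by (rule PG_line_scale)
    finally show ?thesis ..
  next
    case False
    define m where "m = - u1 / u2"
    have "u1 = u2 * - m" "u0 = u2 * (m * a - b)"
      using on_t False by (simp_all add: m_def algebra_simps eq_neg_iff_add_eq_0)
    with t(1) have "t = PG_line (u2 * (m * a - b), u2 * - m, u2 * 1)" by simp
    also have "\<dots> = affine_line a b m"
      unfolding affine_line_def using False by (rule PG_line_scale)
    finally show ?thesis by blast
  qed
qed

lemma lines_through_point_at_infinity:
  assumes "t \<in> PG_lines" "point_at_infinity \<in> t"
  shows "t = line_at_infinity \<or> (\<exists>e. t = vertical_line e)"
proof -
  obtain u0 u1 u2 where t: "t = PG_line (u0, u1, u2)" "(u0, u1, u2) \<noteq> (0, 0, 0)"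
    using assms(1) by (rule PG_linesE)
  have "u2 = 0"
    using assms(2) t(1) by (simp add: point_at_infinity_in_PG_line_iff)
  show ?thesis
  proof (cases "u1 = 0")
    case True
    with t(2) \<open>u2 = 0\<close> have "u0 \<noteq> 0" by auto
    have "t = PG_line (u0 * 1, u0 * 0, u0 * 0)"
      using t(1) True \<open>u2 = 0\<close> by simp
    also have "\<dots> = line_at_infinity"
      unfolding line_at_infinity_def using \<open>u0 \<noteq> 0\<close> by (rule PG_line_scale)
    finally show ?thesis ..
  next
    case False
    have "t = PG_line (u1 * - (- u0 / u1), u1 * 1, u1 * 0)"
      using t(1) False \<open>u2 = 0\<close> by simp
    also have "\<dots> = vertical_line (- u0 / u1)"
      unfolding vertical_line_def using False by (rule PG_line_scale)
    finally show ?thesis by blast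
  qed
qed

lemma ex1_tangentI:
  assumes "T \<in> PG_lines" "S \<inter> T = {P}"
    and "\<And>t. t \<in> PG_lines \<Longrightarrow> P \<in> t \<Longrightarrow> t \<noteq> T \<Longrightarrow> \<exists>X \<in> S \<inter> t. X \<noteq> P"
  shows "\<exists>!t. t \<in> PG_lines \<and> S \<inter> t = {P}"
proof (rule ex1I[of _ T])
  show "T \<in> PG_lines \<and> S \<inter> T = {P}" using assms(1,2) by simp
  fix t
  assume t: "t \<in> PG_lines \<and> S \<inter> t = {P}"
  show "t = T"
  proof (rule ccontr)
    assume "t \<noteq> T"
    moreover from t have "P \<in> t" by blast
    ultimately obtain X where "X \<in> S \<inter> t" "X \<noteq> P" using t assms(3) by meson
    with t show False by blast
  qed
qed

definition hermitian_affine :: "nat \<Rightarrow> ('a::field \<times> 'a) set" where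
  "hermitian_affine q = {(x, y). y + y ^ q + x ^ (q + 1) = 0}"

lemma affine_point_in_hermitian_curve_iff:
  "affine_point p \<in> hermitian_curve q \<longleftrightarrow> p \<in> hermitian_affine q"
  unfolding affine_point_def hermitian_affine_def
  by (cases p) (simp add: proj_point_in_hermitian_curve_iff)

lemma affine_points_subset_hermitian_curve:
  "A \<subseteq> hermitian_affine q \<Longrightarrow> affine_point ` A \<subseteq> hermitian_curve q"
  by (auto simp: affine_point_in_hermitian_curve_iff)

lemma hermitian_curve_eq:
  assumes "0 < q"
  shows "hermitian_curve q = insert point_at_infinity (affine_point ` hermitian_affine q)"
proof (intro equalityI subsetI)
  fix P :: "'a vec3 set"
  assume P_on: "P \<in> hermitian_curve q"
  then have "P \<in> PG_points" unfolding hermitian_curve_def by auto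
  then obtain x0 x1 x2 where P: "P = proj_point (x0, x1, x2)" "(x0, x1, x2) \<noteq> (0, 0, 0)"
    by (rule PG_pointsE)
  have eq: "x2 * x0 ^ q + x2 ^ q * x0 + x1 ^ (q + 1) = 0"
    using P_on P proj_point_in_hermitian_curve_iff by metis
  show "P \<in> insert point_at_infinity (affine_point ` hermitian_affine q)"
  proof (cases "x0 = 0")
    case True
    with eq assms have "x1 = 0" by (simp add: power_0_left)
    with P True have "x2 \<noteq> 0" by simp
    have "P = proj_point (x2 * 0, x2 * 0, x2 * 1)"
      using P True \<open>x1 = 0\<close> by simp
    also have "\<dots> = point_at_infinity"
      unfolding point_at_infinity_def using \<open>x2 \<noteq> 0\<close> by (rule proj_point_scale)
    finally show ?thesis by simp
  next
    case False
    have "P = proj_point (x0 * 1, x0 * (x1 / x0), x0 * (x2 / x0))"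
      using P False by simp
    also have "\<dots> = proj_point (1, x1 / x0, x2 / x0)"
      using False by (rule proj_point_scale)
    also have "\<dots> = affine_point (x1 / x0, x2 / x0)"
      by (simp add: affine_point_def)
    finally have "P = affine_point (x1 / x0, x2 / x0)" .
    with P_on show ?thesis by (auto simp: affine_point_in_hermitian_curve_iff)
  qed
next
  fix P :: "'a vec3 set"
  assume "P \<in> insert point_at_infinity (affine_point ` hermitian_affine q)"
  then show "P \<in> hermitian_curve q"
    using assms affine_point_in_hermitian_curve_iff
    by (auto simp: point_at_infinity_def proj_point_in_hermitian_curve_iff)
qed

lemma card_affine_points: "card (affine_point ` A) = card A"
  by (simp add: card_image inj_on_def)

lemma card_insert_point_at_infinity_affine_points:
  assumes "finite A"
  shows "card (insert point_at_infinity (affine_point ` A)) = card A + 1"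
proof -
  have "point_at_infinity \<notin> affine_point ` A" by auto
  with assms show ?thesis by (simp add: card_affine_points)
qed

section \<open>The field of order \<open>q\<^sup>2\<close>\<close>

lemma of_nat_card_UNIV_eq_0: "of_nat (card (UNIV :: 'a::{finite, ring_1} set)) = (0 :: 'a)"
proof -
  have "(\<Sum>y\<in>(UNIV :: 'a set). y + 1) = (\<Sum>y\<in>UNIV. y)"
    by (rule sum.reindex_bij_witness[of _ "\<lambda>y. y - 1" "\<lambda>y. y + 1"]) auto
  then show ?thesis by (simp add: sum.distrib)
qed

text \<open>The library's \<open>finite_field_power_card_eq_same\<close> needs the sort \<open>finite_field\<close>.\<close>

lemma power_card_UNIV_eq_self:
  fixes x :: "'a::{finite, field}"
  shows "x ^ card (UNIV :: 'a set) = x"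
proof (cases "x = 0")
  case True
  then show ?thesis using finite_UNIV_card_ge_0[where ?'a = 'a] by simp
next
  case False
  define U where "U = UNIV - {0 :: 'a}"
  have "x ^ card U * (\<Prod>y\<in>U. y) = (\<Prod>y\<in>U. x * y)"
    by (simp add: prod.distrib)
  also have "\<dots> = (\<Prod>y\<in>U. y)"
    by (rule prod.reindex_bij_witness[of _ "\<lambda>y. y / x" "\<lambda>y. x * y"]) (use False in \<open>auto simp: U_def\<close>)
  finally have "x ^ card U * (\<Prod>y\<in>U. y) = 1 * (\<Prod>y\<in>U. y)" by simp
  moreover have "(\<Prod>y\<in>U. y) \<noteq> 0" by (simp add: U_def)
  ultimately have "x ^ card U = 1" by (rule mult_right_cancel[THEN iffD1, rotated])
  moreover have "card (UNIV :: 'a set) = Suc (card U)"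
    using finite_UNIV_card_ge_0[where ?'a = 'a] by (simp add: U_def card_Diff_singleton)
  ultimately show ?thesis by simp
qed

locale hermitian_field =
  fixes q p n :: nat and field_type :: "'a::{finite, field} itself"
  assumes prime_p: "prime p" and n_pos: "1 \<le> n" and q_eq: "q = p ^ n"
    and card_UNIV: "card (UNIV :: 'a set) = q ^ 2"
begin

lemma q_ge_2: "2 \<le> q"
proof -
  have "2 \<le> p" using prime_p by (rule prime_ge_2_nat)
  also have "p \<le> p ^ n" using n_pos \<open>2 \<le> p\<close> by (simp add: self_le_power)
  finally show ?thesis by (simp add: q_eq)
qed

lemma CHAR_eq: "CHAR('a) = p"
proof -
  have prime_CHAR: "prime CHAR('a)"
    using prime_CHAR_semidom finite_imp_CHAR_pos[where ?'a = 'a] by auto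
  have "CHAR('a) dvd card (UNIV :: 'a set)"
    using of_nat_card_UNIV_eq_0 of_nat_eq_0_iff_char_dvd by blast
  then have "CHAR('a) dvd p ^ (n * 2)"
    by (simp add: card_UNIV q_eq power_mult)
  then have "CHAR('a) dvd p" by (rule prime_dvd_power[OF prime_CHAR])
  with prime_CHAR prime_p show ?thesis by (simp add: primes_dvd_imp_eq)
qed

lemma frobenius_add: "(x + y :: 'a) ^ q = x ^ q + y ^ q"
  by (rule freshmans_dream') (simp_all add: CHAR_eq prime_p q_eq)

lemma frobenius_minus: "(- x :: 'a) ^ q = - (x ^ q)"
proof -
  have "x ^ q + (- x) ^ q = 0"
    using frobenius_add[of x "- x"] q_ge_2 by (simp add: power_0_left)
  then show ?thesis by (simp add: eq_neg_iff_add_eq_0 add.commute)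
qed

lemma frobenius_diff: "(x - y :: 'a) ^ q = x ^ q - y ^ q"
  using frobenius_add[of x "- y"] by (simp add: frobenius_minus)

lemma frobenius_frobenius: "((x :: 'a) ^ q) ^ q = x"
  using power_card_UNIV_eq_self[of x] by (simp add: card_UNIV power2_eq_square power_mult)

lemma frobenius_eq_iff: "(x :: 'a) ^ q = y ^ q \<longleftrightarrow> x = y"
proof
  assume "x ^ q = y ^ q"
  then have "(x ^ q) ^ q = (y ^ q) ^ q" by simp
  then show "x = y" by (simp only: frobenius_frobenius)
qed simp

lemma trace_frobenius_fixed: "((x :: 'a) + x ^ q) ^ q = x + x ^ q"
  by (simp add: frobenius_add frobenius_frobenius add.commute)

lemma norm_frobenius_fixed: "((x :: 'a) ^ (q + 1)) ^ q = x ^ (q + 1)"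
  by (simp add: power_mult_distrib frobenius_frobenius mult.commute)

lemma card_frobenius_fixed_le: "card {x :: 'a. x ^ q = x} \<le> q"
proof -
  have "{x :: 'a. x ^ q = x} = {x. x ^ q + (- 1) * x + 0 = 0}" by auto
  then show ?thesis using card_trinomial_roots_le[OF q_ge_2, of "- 1 :: 'a" 0] by simp
qed

text \<open>Trace and norm onto \<open>GF(q)\<close> have fibres of exactly \<open>q\<close> and \<open>q + 1\<close> elements:
  the degree bound caps every fibre, and the fibres together exhaust the field.\<close>

lemma card_trace_fibre:
  assumes "(t :: 'a) ^ q = t"
  shows "card {x :: 'a. x + x ^ q = t} = q"
proof -
  have "card {x \<in> (UNIV :: 'a set). x + x ^ q = t} = q"
  proof (rule card_fibre_eq_if_card_eq_mult[where B = "{x :: 'a. x ^ q = x}" and b = q])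
    show "(\<lambda>x. x + x ^ q) ` UNIV \<subseteq> {x :: 'a. x ^ q = x}"
      using trace_frobenius_fixed by auto
    show "card {x :: 'a. x ^ q = x} \<le> q" by (rule card_frobenius_fixed_le)
    show "card {x \<in> UNIV. x + x ^ q = y} \<le> q" for y :: 'a
    proof -
      have "{x \<in> UNIV. x + x ^ q = y} = {x. x ^ q + 1 * x + (- y) = 0}"
        by (auto simp: algebra_simps)
      then show ?thesis using card_trinomial_roots_le[OF q_ge_2, of 1 "- y"] by simp
    qed
    show "card (UNIV :: 'a set) = q * q" by (simp add: card_UNIV power2_eq_square)
  qed (use assms in auto)
  then show ?thesis by simp
qed

lemma card_norm_fibre:
  assumes "(z :: 'a) \<noteq> 0"
  shows "card {y :: 'a. y ^ (q + 1) = z ^ (q + 1)} = q + 1"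
proof -
  let ?B = "{x :: 'a. x ^ q = x} - {0}"
  have "card {y \<in> UNIV - {0 :: 'a}. y ^ (q + 1) = z ^ (q + 1)} = q + 1"
  proof (rule card_fibre_eq_if_card_eq_mult[where B = ?B and b = "q - 1"])
    show "(\<lambda>y. y ^ (q + 1)) ` (UNIV - {0}) \<subseteq> ?B"
      using norm_frobenius_fixed by auto
    have "card ?B = card {x :: 'a. x ^ q = x} - 1"
      using q_ge_2 by (subst card_Diff_singleton) auto
    then show "card ?B \<le> q - 1" using card_frobenius_fixed_le by simp
    show "card {y \<in> UNIV - {0}. y ^ (q + 1) = w} \<le> q + 1" for w :: 'a
    proof -
      have "card {y \<in> UNIV - {0}. y ^ (q + 1) = w} \<le> card {y. y ^ (q + 1) + 0 * y + (- w) = 0}"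
        by (intro card_mono) auto
      also have "\<dots> \<le> q + 1" using card_trinomial_roots_le[of "q + 1" 0 "- w"] q_ge_2 by simp
      finally show ?thesis .
    qed
    have "card (UNIV - {0 :: 'a}) = q ^ 2 - 1" by (simp add: card_UNIV card_Diff_singleton)
    also have "\<dots> = (q + 1) * (q - 1)" by (simp add: power2_eq_square algebra_simps)
    finally show "card (UNIV - {0 :: 'a}) = (q + 1) * (q - 1)" .
    show "z ^ (q + 1) \<in> ?B" using assms norm_frobenius_fixed[of z] by simp
  qed auto
  moreover have "{y \<in> UNIV - {0 :: 'a}. y ^ (q + 1) = z ^ (q + 1)} = {y. y ^ (q + 1) = z ^ (q + 1)}"
    using assms by auto
  ultimately show ?thesis by simp
qed

lemma card_hermitian_column: "card {y :: 'a. (x, y) \<in> hermitian_affine q} = q"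
proof -
  have "(- (x ^ (q + 1))) ^ q = - (x ^ (q + 1))"
    by (simp only: frobenius_minus norm_frobenius_fixed)
  moreover have "{y :: 'a. (x, y) \<in> hermitian_affine q} = {y. y + y ^ q = - (x ^ (q + 1))}"
    unfolding hermitian_affine_def by (auto simp: eq_neg_iff_add_eq_0)
  ultimately show ?thesis by (simp add: card_trace_fibre)
qed

lemma card_hermitian_affine: "card (hermitian_affine q :: ('a \<times> 'a) set) = q ^ 3"
proof -
  have "card (hermitian_affine q :: ('a \<times> 'a) set) = (\<Sum>x\<in>UNIV. card {y :: 'a. (x, y) \<in> hermitian_affine q})"
    by (simp add: card_eq_sum_column_cards)
  also have "\<dots> = q ^ 2 * q" by (simp add: card_hermitian_column card_UNIV)
  finally show ?thesis by (simp add: power2_eq_square power3_eq_cube)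
qed

lemma card_hermitian_curve: "card (hermitian_curve q :: 'a vec3 set set) = q ^ 3 + 1"
  using q_ge_2 by (simp add: hermitian_curve_eq card_insert_point_at_infinity_affine_points
      card_hermitian_affine)

section \<open>Tangents and secants of the Hermitian curve\<close>

lemma on_hermitian_tangent_imp_eq:
  fixes a b x :: 'a
  assumes "(a, b) \<in> hermitian_affine q" "(x, b - a ^ q * (x - a)) \<in> hermitian_affine q"
  shows "x = a"
proof -
  let ?y = "b - a ^ q * (x - a)"
  have "?y ^ q = b ^ q - (a ^ q) ^ q * (x - a) ^ q"
    by (simp only: frobenius_diff power_mult_distrib)
  also have "\<dots> = b ^ q - a * (x ^ q - a ^ q)"
    by (simp only: frobenius_frobenius frobenius_diff)
  finally have "(x - a) * (x ^ q - a ^ q) = (?y + ?y ^ q + x ^ (q + 1)) - (b + b ^ q + a ^ (q + 1))"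
    by (simp add: algebra_simps)
  also have "\<dots> = 0" using assms by (simp add: hermitian_affine_def)
  finally show "x = a" by (simp add: frobenius_eq_iff)
qed

lemma hermitian_form_on_line:
  fixes c m x :: 'a
  shows "(c + m * x) + (c + m * x) ^ q + x ^ (q + 1) = (x + m ^ q) ^ (q + 1) + (c + c ^ q - m * m ^ q)"
proof -
  have "(c + m * x) ^ q = c ^ q + m ^ q * x ^ q"
    by (simp add: frobenius_add power_mult_distrib)
  moreover have "(x + m ^ q) ^ (q + 1) = (x + m ^ q) * (x ^ q + m)"
    by (simp add: frobenius_add frobenius_frobenius)
  ultimately show ?thesis by (simp add: algebra_simps)
qed

lemma on_hermitian_secant_iff:
  fixes a b m x :: 'a
  assumes "(a, b) \<in> hermitian_affine q"
  shows "(x, b + m * (x - a)) \<in> hermitian_affine q \<longleftrightarrow>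
    (x + m ^ q) ^ (q + 1) = (a + m ^ q) ^ (q + 1)"
proof -
  define N where "N z = (z + m ^ q) ^ (q + 1)" for z
  define K where "K = (b - m * a) + (b - m * a) ^ q - m * m ^ q"
  have on_curve_iff: "(z, b + m * (z - a)) \<in> hermitian_affine q \<longleftrightarrow> N z + K = 0" for z
  proof -
    have "b + m * (z - a) = (b - m * a) + m * z" by (simp add: algebra_simps)
    then show ?thesis
      unfolding hermitian_affine_def N_def K_def
      by (simp only: mem_Collect_eq case_prod_conv hermitian_form_on_line)
  qed
  have "N a + K = 0" using on_curve_iff[of a] assms by simp
  then have "N x + K = 0 \<longleftrightarrow> N x = N a" by (metis add_right_cancel)
  then show ?thesis unfolding on_curve_iff N_def .
qed

lemma card_hermitian_secant:
  fixes a b m :: 'a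
  assumes "(a, b) \<in> hermitian_affine q" "m \<noteq> - (a ^ q)"
  shows "card {x. (x, b + m * (x - a)) \<in> hermitian_affine q} = q + 1"
proof -
  have "a + m ^ q \<noteq> 0"
  proof
    assume "a + m ^ q = 0"
    then have "- a = m ^ q" by (simp only: neg_eq_iff_add_eq_0)
    then have "(- a) ^ q = (m ^ q) ^ q" by (rule arg_cong)
    then have "- (a ^ q) = m" by (simp only: frobenius_frobenius frobenius_minus)
    with assms(2) show False by simp
  qed
  let ?Y = "{y. y ^ (q + 1) = (a + m ^ q) ^ (q + 1)}"
  have "{x. (x, b + m * (x - a)) \<in> hermitian_affine q} = (\<lambda>y. y - m ^ q) ` ?Y"
  proof (intro equalityI subsetI)
    fix x
    assume "x \<in> {x. (x, b + m * (x - a)) \<in> hermitian_affine q}"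
    then have "x + m ^ q \<in> ?Y" using on_hermitian_secant_iff[OF assms(1)] by simp
    then show "x \<in> (\<lambda>y. y - m ^ q) ` ?Y" by (rule rev_image_eqI) simp
  next
    fix x
    assume "x \<in> (\<lambda>y. y - m ^ q) ` ?Y"
    then obtain y where "x = y - m ^ q" "y \<in> ?Y" by (rule imageE)
    then show "x \<in> {x. (x, b + m * (x - a)) \<in> hermitian_affine q}"
      using on_hermitian_secant_iff[OF assms(1), where m = m and x = x] by simp
  qed
  moreover have "inj_on (\<lambda>y. y - m ^ q) ?Y" by (simp add: inj_on_def)
  ultimately show ?thesis
    using card_norm_fibre[OF \<open>a + m ^ q \<noteq> 0\<close>] by (simp add: card_image)
qed

text \<open>The \<open>q + 1\<close> curve points on a secant have distinct abscissae, so one of them avoids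
  the abscissa \<open>a\<close> and any fewer than \<open>q\<close> further ones.\<close>

lemma hermitian_secant_point_outside:
  fixes a b m :: 'a and C :: "'a set"
  assumes "(a, b) \<in> hermitian_affine q" "m \<noteq> - (a ^ q)" "card C < q"
  obtains x where "x \<noteq> a" "x \<notin> C" "(x, b + m * (x - a)) \<in> hermitian_affine q"
proof -
  let ?X = "{x. (x, b + m * (x - a)) \<in> hermitian_affine q}"
  have "\<not> ?X \<subseteq> insert a C"
  proof
    assume "?X \<subseteq> insert a C"
    then have "card ?X \<le> card (insert a C)" by (rule card_mono[rotated]) simp
    also have "\<dots> \<le> card C + 1" by (simp add: card_insert_if)
    finally show False using card_hermitian_secant[OF assms(1,2)] assms(3) by simp
  qed
  then show ?thesis using that by blast
qed

lemma hermitian_curve_inter_tangent: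
  fixes a b :: 'a
  assumes "(a, b) \<in> hermitian_affine q"
  shows "hermitian_curve q \<inter> affine_line a b (- (a ^ q)) = {affine_point (a, b)}"
proof (intro equalityI subsetI)
  fix P
  assume P: "P \<in> hermitian_curve q \<inter> affine_line a b (- (a ^ q))"
  then obtain x y where xy: "(x, y) \<in> hermitian_affine q" "P = affine_point (x, y)"
    using q_ge_2 by (auto simp: hermitian_curve_eq)
  with P have y: "y = b - a ^ q * (x - a)" by simp
  with xy(1) have "(x, b - a ^ q * (x - a)) \<in> hermitian_affine q" by simp
  with assms have "x = a" by (rule on_hermitian_tangent_imp_eq)
  with y xy(2) show "P \<in> {affine_point (a, b)}" by simp
next
  fix P
  assume "P \<in> {affine_point (a, b)}"
  then show "P \<in> hermitian_curve q \<inter> affine_line a b (- (a ^ q))"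
    using assms by (simp add: affine_point_in_hermitian_curve_iff)
qed

lemma ex1_tangent_at_affine_point:
  fixes a b :: 'a
  assumes S: "S \<subseteq> hermitian_curve q" "affine_point (a, b) \<in> S"
    and on_curve: "(a, b) \<in> hermitian_affine q"
    and vertical: "\<exists>X \<in> S \<inter> vertical_line a. X \<noteq> affine_point (a, b)"
    and secant: "\<And>m. m \<noteq> - (a ^ q) \<Longrightarrow> \<exists>X \<in> S \<inter> affine_line a b m. X \<noteq> affine_point (a, b)"
  shows "\<exists>!t. t \<in> PG_lines \<and> S \<inter> t = {affine_point (a, b)}"
proof (rule ex1_tangentI[where T = "affine_line a b (- (a ^ q))"])
  show "S \<inter> affine_line a b (- (a ^ q)) = {affine_point (a, b)}"
    using S hermitian_curve_inter_tangent[OF on_curve] by blast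
next
  fix t
  assume t: "t \<in> PG_lines" "affine_point (a, b) \<in> t" "t \<noteq> affine_line a b (- (a ^ q))"
  from lines_through_affine_point[OF t(1,2)]
  consider "t = vertical_line a" | m where "t = affine_line a b m" by blast
  then show "\<exists>X \<in> S \<inter> t. X \<noteq> affine_point (a, b)"
  proof cases
    case 1
    with vertical show ?thesis by simp
  next
    case (2 m)
    with t(3) have "m \<noteq> - (a ^ q)" by blast
    with 2 secant show ?thesis by simp
  qed
qed simp

lemma ex1_tangent_at_point_at_infinity:
  "\<exists>!t. t \<in> PG_lines \<and> hermitian_curve q \<inter> t = {point_at_infinity :: 'a vec3 set}"
proof (rule ex1_tangentI[where T = line_at_infinity])
  have "affine_point p \<notin> line_at_infinity" for p :: "'a \<times> 'a"
    by (cases p) simp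
  then show "hermitian_curve q \<inter> line_at_infinity = {point_at_infinity}"
    using q_ge_2 by (auto simp: hermitian_curve_eq)
next
  fix t :: "'a vec3 set set"
  assume "t \<in> PG_lines" "point_at_infinity \<in> t" "t \<noteq> line_at_infinity"
  then obtain e where t: "t = vertical_line e"
    using lines_through_point_at_infinity by blast
  have "{y. (e, y) \<in> hermitian_affine q} \<noteq> {}"
    using card_hermitian_column[of e] q_ge_2 by (intro notI) simp
  then obtain y where "(e, y) \<in> hermitian_affine q" by blast
  then show "\<exists>X \<in> hermitian_curve q \<inter> t. X \<noteq> point_at_infinity"
    unfolding t
    by (intro bexI[of _ "affine_point (e, y)"]) (simp_all add: affine_point_in_hermitian_curve_iff)
qed simp

section \<open>Semiovals on the Hermitian curve\<close>

lemma semioval_hermitian_curve: "semioval (hermitian_curve q :: 'a vec3 set set)"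
proof -
  let ?S = "hermitian_curve q :: 'a vec3 set set"
  have S_eq: "?S = insert point_at_infinity (affine_point ` hermitian_affine q)"
    using q_ge_2 by (simp add: hermitian_curve_eq)
  have "\<exists>!t. t \<in> PG_lines \<and> ?S \<inter> t = {affine_point (a, b)}"
    if "(a, b) \<in> hermitian_affine q" for a b
  proof (rule ex1_tangent_at_affine_point)
    show "\<exists>X \<in> ?S \<inter> vertical_line a. X \<noteq> affine_point (a, b)"
      using S_eq by (intro bexI[of _ point_at_infinity]) simp_all
  next
    fix m
    assume "m \<noteq> - (a ^ q)"
    with that obtain x where "x \<noteq> a" "(x, b + m * (x - a)) \<in> hermitian_affine q"
      by (rule hermitian_secant_point_outside[where C = "{}"]) (use q_ge_2 in auto)
    then show "\<exists>X \<in> ?S \<inter> affine_line a b m. X \<noteq> affine_point (a, b)"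
      by (intro bexI[of _ "affine_point (x, b + m * (x - a))"])
        (simp_all add: affine_point_in_hermitian_curve_iff)
  qed (use that in \<open>simp_all add: affine_point_in_hermitian_curve_iff\<close>)
  note affine_case = this
  have "\<exists>!t. t \<in> PG_lines \<and> ?S \<inter> t = {P}" if "P \<in> ?S" for P
  proof (cases "P = point_at_infinity")
    case True
    then show ?thesis using ex1_tangent_at_point_at_infinity by simp
  next
    case False
    with that have "P \<in> affine_point ` hermitian_affine q" unfolding S_eq by simp
    then obtain p where p: "P = affine_point p" "p \<in> hermitian_affine q" by (rule imageE)
    then show ?thesis using affine_case by (cases p) simp
  qed
  moreover have "?S \<subseteq> PG_points" unfolding hermitian_curve_def by blast
  moreover have "?S \<noteq> {}" unfolding S_eq by blast
  ultimately show ?thesis unfolding semioval_def by simp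
qed

lemma semioval_hermitian_affine_subset:
  fixes A :: "('a \<times> 'a) set" and C :: "'a set"
  assumes A: "A \<subseteq> hermitian_affine q" "A \<noteq> {}"
    and outside_C: "\<And>x y. (x, y) \<in> hermitian_affine q \<Longrightarrow> x \<notin> C \<Longrightarrow> (x, y) \<in> A"
    and "card C < q"
    and no_single: "\<And>x. card {y. (x, y) \<in> A} \<noteq> 1"
  shows "semioval (affine_point ` A)"
proof -
  let ?S = "affine_point ` A"
  have on_S: "affine_point p \<in> ?S \<longleftrightarrow> p \<in> A" for p
    by (rule inj_image_mem_iff) (simp add: inj_def)
  have "\<exists>!t. t \<in> PG_lines \<and> ?S \<inter> t = {P}" if "P \<in> ?S" for P
  proof -
    obtain p where p: "P = affine_point p" "p \<in> A" using \<open>P \<in> ?S\<close> by (rule imageE)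
    obtain a b where "p = (a, b)" by (cases p)
    with p have ab: "P = affine_point (a, b)" "(a, b) \<in> A" by simp_all
    with A(1) have ab_on_curve: "(a, b) \<in> hermitian_affine q" by blast
    show ?thesis
      unfolding ab(1)
    proof (rule ex1_tangent_at_affine_point)
      show "?S \<subseteq> hermitian_curve q"
        using A(1) by (rule affine_points_subset_hermitian_curve)
      show "affine_point (a, b) \<in> ?S" using ab(2) by (simp only: on_S)
      show "(a, b) \<in> hermitian_affine q" by (rule ab_on_curve)
    next
      have "{y. (a, y) \<in> A} \<noteq> {b}" using no_single[of a] by (intro notI) simp
      with ab(2) obtain b' where "b' \<noteq> b" "(a, b') \<in> A" by blast
      then show "\<exists>X \<in> ?S \<inter> vertical_line a. X \<noteq> affine_point (a, b)"
        by (intro bexI[of _ "affine_point (a, b')"]) (simp_all add: on_S)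
    next
      fix m
      assume "m \<noteq> - (a ^ q)"
      with ab_on_curve obtain x
        where x: "x \<noteq> a" "x \<notin> C" "(x, b + m * (x - a)) \<in> hermitian_affine q"
        using \<open>card C < q\<close> by (rule hermitian_secant_point_outside)
      then have "(x, b + m * (x - a)) \<in> A" by (intro outside_C)
      with x(1) show "\<exists>X \<in> ?S \<inter> affine_line a b m. X \<noteq> affine_point (a, b)"
        by (intro bexI[of _ "affine_point (x, b + m * (x - a))"]) (simp_all add: on_S)
    qed
  qed
  moreover have "?S \<subseteq> PG_points" by (auto simp: affine_point_in_PG_points)
  moreover have "?S \<noteq> {}" using A(2) by simp
  ultimately show ?thesis unfolding semioval_def by simp
qed

lemma exists_column_sizes:
  assumes "t = 0 \<or> 2 \<le> t \<and> t \<le> q ^ 2 - q"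
  obtains C :: "'a set" and g :: "'a \<Rightarrow> nat"
  where "card C = q - 1" "\<forall>c\<in>C. g c \<le> q \<and> g c \<noteq> 1" "(\<Sum>c\<in>C. g c) = t"
proof -
  have "q - 1 \<le> card (UNIV :: 'a set)"
    using power_increasing[of 1 2 q] q_ge_2 by (simp add: card_UNIV)
  then obtain C :: "'a set" where "C \<subseteq> UNIV" "card C = q - 1"
    by (rule obtain_subset_with_card_n)
  have "(q - 1) * q = q ^ 2 - q" by (simp add: power2_eq_square diff_mult_distrib)
  then have "t \<le> card C * q" using assms \<open>card C = q - 1\<close> by auto
  moreover have "3 \<le> q \<or> even t" using assms q_ge_2 by (cases "q = 2") auto
  moreover have "t \<noteq> 1" using assms by auto
  ultimately show ?thesis
    using exists_summands_avoiding_one[OF finite q_ge_2] that \<open>card C = q - 1\<close> by blast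
qed

lemma exists_hermitian_affine_subset_card:
  assumes "t = 0 \<or> 2 \<le> t \<and> t \<le> q ^ 2 - q"
  obtains A :: "('a \<times> 'a) set" and C :: "'a set"
  where "A \<subseteq> hermitian_affine q"
    and "\<And>x y. (x, y) \<in> hermitian_affine q \<Longrightarrow> x \<notin> C \<Longrightarrow> (x, y) \<in> A"
    and "card C < q" and "\<And>x. card {y. (x, y) \<in> A} \<noteq> 1"
    and "card A = q ^ 3 - q ^ 2 + q + t"
proof -
  obtain C :: "'a set" and g where C: "card C = q - 1"
    and g: "\<forall>c\<in>C. g c \<le> q \<and> g c \<noteq> 1" "(\<Sum>c\<in>C. g c) = t"
    using exists_column_sizes[OF assms] by blast
  define kept where "kept x = (if x \<in> C then g x else q)" for x
  have kept_le: "kept x \<le> card {y. (x, y) \<in> hermitian_affine q}" for x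
    using g(1) by (simp add: kept_def card_hermitian_column)
  obtain A :: "('a \<times> 'a) set"
    where A: "A \<subseteq> hermitian_affine q" "\<And>x. card {y. (x, y) \<in> A} = kept x"
    using exists_subset_with_column_cards[OF kept_le] by blast
  show ?thesis
  proof
    show "A \<subseteq> hermitian_affine q" by (rule A(1))
    show "(x, y) \<in> A" if "(x, y) \<in> hermitian_affine q" "x \<notin> C" for x y
    proof -
      have "{y. (x, y) \<in> A} \<subseteq> {y. (x, y) \<in> hermitian_affine q}" using A(1) by blast
      moreover have "card {y. (x, y) \<in> A} = card {y. (x, y) \<in> hermitian_affine q}"
        using A(2) \<open>x \<notin> C\<close> by (simp add: kept_def card_hermitian_column)
      ultimately have "{y. (x, y) \<in> A} = {y. (x, y) \<in> hermitian_affine q}"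
        by (intro card_subset_eq) simp_all
      with that(1) show ?thesis by blast
    qed
    show "card C < q" using C q_ge_2 by simp
    show "card {y. (x, y) \<in> A} \<noteq> 1" for x
      using A(2) g(1) q_ge_2 by (simp add: kept_def)
    have "card A = (\<Sum>x\<in>UNIV. kept x)"
      using A(2) by (simp add: card_eq_sum_column_cards)
    also have "\<dots> = (\<Sum>x\<in>C. kept x) + (\<Sum>x\<in>- C. kept x)"
      by (subst sum.Int_Diff[of UNIV _ C]) (simp_all add: Compl_eq_Diff_UNIV)
    also have "(\<Sum>x\<in>C. kept x) = t"
      using g(2) by (simp add: kept_def)
    also have "(\<Sum>x\<in>- C. kept x) = card (- C) * q"
      by (simp add: kept_def)
    also have "card (- C) = q ^ 2 - (q - 1)"
      by (simp add: Compl_eq_Diff_UNIV card_Diff_subset card_UNIV C)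
    also have "(q ^ 2 - (q - 1)) * q = q ^ 3 - q ^ 2 + q"
    proof -
      obtain r where "q = Suc r" using q_ge_2 by (cases q) auto
      then show ?thesis by (simp add: power2_eq_square power3_eq_cube algebra_simps)
    qed
    finally show "card A = q ^ 3 - q ^ 2 + q + t" by simp
  qed
qed

lemma exists_semioval_in_hermitian_curve:
  assumes "t = 0 \<or> 2 \<le> t \<and> t \<le> q ^ 2 - q"
  obtains S :: "'a vec3 set set"
  where "semioval S" "S \<subseteq> hermitian_curve q" "card S = q ^ 3 - q ^ 2 + q + t"
proof -
  obtain A :: "('a \<times> 'a) set" and C :: "'a set" where A: "A \<subseteq> hermitian_affine q"
    "\<And>x y. (x, y) \<in> hermitian_affine q \<Longrightarrow> x \<notin> C \<Longrightarrow> (x, y) \<in> A"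
    "card C < q" "\<And>x. card {y. (x, y) \<in> A} \<noteq> 1" "card A = q ^ 3 - q ^ 2 + q + t"
    using exists_hermitian_affine_subset_card[OF assms] by blast
  have "card A \<noteq> 0" using A(5) q_ge_2 by linarith
  then have "A \<noteq> {}" by auto
  with A(1-4) have "semioval (affine_point ` A)"
    by (intro semioval_hermitian_affine_subset)
  moreover have "affine_point ` A \<subseteq> hermitian_curve q"
    using A(1) by (rule affine_points_subset_hermitian_curve)
  moreover have "card (affine_point ` A) = q ^ 3 - q ^ 2 + q + t"
    using A(5) by (simp only: card_affine_points)
  ultimately show ?thesis by (rule that)
qed

end

theorem mainTheorem3:
  fixes q k :: nat
  assumes "\<exists>p n. prime p \<and> n \<ge> 1 \<and> q = p ^ n"
    and "card (UNIV :: ('a::{finite, field}) set) = q ^ 2"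
    and "k = q ^ 3 - q ^ 2 + q \<or> (q ^ 3 - q ^ 2 + q + 2 \<le> k \<and> k \<le> q ^ 3 + 1)"
  shows "\<exists>S :: 'a vec3 set set. semioval S \<and> S \<subseteq> hermitian_curve q \<and> card S = k"
proof -
  obtain p n where "prime p" "n \<ge> 1" "q = p ^ n" using assms(1) by blast
  then interpret hermitian_field q p n "TYPE('a)"
    using assms(2) by unfold_locales
  show ?thesis
  proof (cases "k = q ^ 3 + 1")
    case True
    then show ?thesis
      using semioval_hermitian_curve card_hermitian_curve by (intro exI[of _ "hermitian_curve q"]) simp
  next
    case False
    define t where "t = k - (q ^ 3 - q ^ 2 + q)"
    have "q \<le> q ^ 2" "q ^ 2 \<le> q ^ 3"
      using power_increasing[of 1 2 q] power_increasing[of 2 3 q] q_ge_2 by simp_all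
    with assms(3) False have "k = q ^ 3 - q ^ 2 + q + t" "t = 0 \<or> 2 \<le> t \<and> t \<le> q ^ 2 - q"
      by (auto simp: t_def)
    then obtain S :: "'a vec3 set set" where "semioval S" "S \<subseteq> hermitian_curve q" "card S = k"
      using exists_semioval_in_hermitian_curve[of t] by auto
    then show ?thesis by blast
  qed
qed

end
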